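(* Let $a,e\in\mathbb{R}$, $\omega>0$, and let $\alpha_i(t)$ ($i=1,\dots,4$) be scalar continuous functions. (i) Suppose $\alpha_3(t)$ is $\omega$-periodic and odd, and $a(a+e)<0$. Then the solution $$x(t)=\sqrt{-a(a+e)}\sin\Big(\int_0^t\alpha_3(s)ds\Big),\ y(t)=\sqrt{-a(a+e)}\cos\Big(\int_0^t\alpha_3(s)ds\Big),\ z(t)=-a$$ of the system $$\begin{aligned}\dot x&=(ax+xz)(1+\alpha_1(t))+x(a+z)\alpha_2(t)+y\alpha_3(t),\\ \dot y&=(ay+yz)(1+\alpha_1(t))+y(a+z)\alpha_2(t)-x\alpha_3(t),\\ \dot z&=(ez-x^2-y^2-z^2)(1+\alpha_1(t)+\alpha_2(t))\end{aligned}$$ is $\omega$-periodic (the period not necessarily minimal). (ii) Suppose $\alpha_3(t)+a^4\alpha_4(t)$ is $\omega$-periodic and odd. Then the solution $$x(t)=a\sin\Big(\int_0^t(\alpha_3(s)+a^4\alpha_4(s))ds\Big),\ y(t)=a\cos\Big(\int_0^t(\alpha_3(s)+a^4\alpha_4(s))ds\Big),\ z(t)=-a$$ of the system $$\begin{aligned}\dot x&=(ax+xz)(1+\alpha_1(t))+x(a+z)\alpha_2(t)+y\alpha_3(t)-y(x^2+y^2)(4az+x^2+y^2+2z^2)\alpha_4(t),\\ \dot y&=(ay+yz)(1+\alpha_1(t))+y(a+z)\alpha_2(t)-x\alpha_3(t)+x(x^2+y^2)(4az+x^2+y^2+2z^2)\alpha_4(t),\\ \dot z&=-(2az+x^2+y^2+z^2)(1+\alpha_1(t)+\alpha_2(t))\end{aligned}$$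 is $\omega$-periodic (the period not necessarily minimal). *)

theory Defs
  imports "HOL-Analysis.Analysis"
begin

end

theory Submission
  imports Defs
begin

text \<open>On the plane \<open>z = -a\<close> the factor \<open>a + z\<close> vanishes, so the \<open>\<alpha>\<^sub>1\<close>- and \<open>\<alpha>\<^sub>2\<close>-terms
  drop out of the \<open>x\<close>- and \<open>y\<close>-equations. On the circle \<open>x\<^sup>2 + y\<^sup>2 = r\<^sup>2\<close> of the given radius the
  right-hand side of the \<open>z\<close>-equation vanishes too, and in the second system the \<open>\<alpha>\<^sub>4\<close>-terms
  become \<open>a\<^sup>4 \<alpha>\<^sub>4\<close> times the rotation field, because \<open>(x\<^sup>2 + y\<^sup>2)(4az + x\<^sup>2 + y\<^sup>2 + 2z\<^sup>2) = a\<^sup>2 (-a\<^sup>2)\<close>.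
  What remains is the rotation \<open>x' = g y\<close>, \<open>y' = -g x\<close>, solved by \<open>(r sin \<theta>, r cos \<theta>)\<close> with
  \<open>\<theta> t = \<integral>\<^sub>0\<^sup>t g\<close>. The angle is \<open>\<omega>\<close>-periodic because \<open>g\<close> is odd and \<open>\<omega>\<close>-periodic: then \<open>\<theta>\<close> is
  even, and \<open>\<theta> (t + \<omega>) - \<theta> t\<close> is constant, equal to \<open>\<theta> (\<omega>/2) - \<theta> (-\<omega>/2) = 0\<close>.\<close>

lemma has_real_derivative_LBINT:
  fixes f :: "real \<Rightarrow> real" and c x :: real
  assumes "continuous_on UNIV f"
  shows "((\<lambda>t. LBINT s=c..t. f s) has_real_derivative f x) (at x)"
proof -
  let ?I = "{min c x - 1..max c x + 1}"
  have "((\<lambda>t. LBINT s=c..t. f s) has_vector_derivative f x) (at x within ?I)"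
    using interval_integral_FTC2[OF _ _ continuous_on_subset[OF assms], of "min c x - 1" c "max c x + 1" x]
    by auto
  moreover have "at x within ?I = at x"
    by (rule at_within_Icc_at) auto
  ultimately show ?thesis
    by (simp add: has_real_derivative_iff_has_vector_derivative)
qed

lemma even_if_derivative_odd:
  fixes F f :: "real \<Rightarrow> real"
  assumes F': "\<And>t. (F has_real_derivative f t) (at t)"
    and odd: "\<And>t. f (- t) = - f t"
  shows "F (- t) = F t"
proof -
  have "((\<lambda>s. F (- s) - F s) has_real_derivative 0) (at s)" for s
    using DERIV_diff[OF DERIV_chain2[OF F' DERIV_minus[OF DERIV_ident]] F', of s] odd[of s]
    by simp
  from DERIV_isconst_all[of "\<lambda>s. F (- s) - F s" t 0] this show ?thesis
    by simp
qed

lemma periodic_if_derivative_periodic_odd: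
  fixes F f :: "real \<Rightarrow> real"
  assumes F': "\<And>t. (F has_real_derivative f t) (at t)"
    and periodic: "\<And>t. f (t + \<omega>) = f t"
    and odd: "\<And>t. f (- t) = - f t"
  shows "F (t + \<omega>) = F t"
proof -
  have "((\<lambda>s. F (s + \<omega>) - F s) has_real_derivative 0) (at s)" for s
    using DERIV_diff[OF DERIV_chain2[OF F' DERIV_add[OF DERIV_ident DERIV_const[of \<omega>]]] F', of s]
      periodic[of s]
    by simp
  from DERIV_isconst_all[of "\<lambda>s. F (s + \<omega>) - F s" t "- \<omega> / 2"] this
  have "F (t + \<omega>) - F t = F (\<omega> / 2) - F (- (\<omega> / 2))"
    by simp
  also have "\<dots> = 0"
    by (simp add: even_if_derivative_odd[of F f, OF F' odd])
  finally show ?thesis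
    by simp
qed

lemma has_real_derivative_circle:
  fixes \<theta> :: "real \<Rightarrow> real"
  assumes "(\<theta> has_real_derivative g) (at t)"
  shows "((\<lambda>t. r * sin (\<theta> t)) has_real_derivative r * cos (\<theta> t) * g) (at t)"
    and "((\<lambda>t. r * cos (\<theta> t)) has_real_derivative - (r * sin (\<theta> t)) * g) (at t)"
  using DERIV_cmult[OF DERIV_chain2[OF DERIV_sin assms], of r]
    DERIV_cmult[OF DERIV_chain2[OF DERIV_cos assms], of r]
  by (simp_all add: algebra_simps)

lemma circle_radius_sq:
  fixes r u :: real
  shows "(r * sin u)\<^sup>2 + (r * cos u)\<^sup>2 = r\<^sup>2"
  by (simp add: power_mult_distrib flip: distrib_left)

lemma first_system_circular_solution:
  fixes a e r :: real and \<theta> \<alpha>1 \<alpha>2 \<alpha>3 :: "real \<Rightarrow> real"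
  assumes \<theta>': "\<And>t. (\<theta> has_real_derivative \<alpha>3 t) (at t)"
    and radius: "r\<^sup>2 = - a * (a + e)"
  defines "x \<equiv> \<lambda>t. r * sin (\<theta> t)" and "y \<equiv> \<lambda>t. r * cos (\<theta> t)" and "z \<equiv> \<lambda>t. - a"
  shows "(x has_real_derivative
            ((a * x t + x t * z t) * (1 + \<alpha>1 t) + x t * (a + z t) * \<alpha>2 t + y t * \<alpha>3 t)) (at t)"
    and "(y has_real_derivative
            ((a * y t + y t * z t) * (1 + \<alpha>1 t) + y t * (a + z t) * \<alpha>2 t - x t * \<alpha>3 t)) (at t)"
    and "(z has_real_derivative
            ((e * z t - (x t)\<^sup>2 - (y t)\<^sup>2 - (z t)\<^sup>2) * (1 + \<alpha>1 t + \<alpha>2 t))) (at t)"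
proof goal_cases
  case 1
  show ?case
    using has_real_derivative_circle(1)[OF \<theta>'] by (simp add: x_def y_def z_def)
next
  case 2
  show ?case
    using has_real_derivative_circle(2)[OF \<theta>'] by (simp add: x_def y_def z_def)
next
  case 3
  have "(x t)\<^sup>2 + (y t)\<^sup>2 = r\<^sup>2"
    unfolding x_def y_def by (rule circle_radius_sq)
  then have "e * z t - (x t)\<^sup>2 - (y t)\<^sup>2 - (z t)\<^sup>2 = 0"
    using radius by (simp add: z_def algebra_simps power2_eq_square)
  then show ?case
    by (simp add: z_def)
qed

lemma second_system_circular_solution:
  fixes a :: real and \<theta> \<alpha>1 \<alpha>2 \<alpha>3 \<alpha>4 :: "real \<Rightarrow> real"
  assumes \<theta>': "\<And>t. (\<theta> has_real_derivative \<alpha>3 t + a ^ 4 * \<alpha>4 t) (at t)"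
  defines "x \<equiv> \<lambda>t. a * sin (\<theta> t)" and "y \<equiv> \<lambda>t. a * cos (\<theta> t)" and "z \<equiv> \<lambda>t. - a"
  shows "(x has_real_derivative
            ((a * x t + x t * z t) * (1 + \<alpha>1 t) + x t * (a + z t) * \<alpha>2 t + y t * \<alpha>3 t
             - y t * ((x t)\<^sup>2 + (y t)\<^sup>2) * (4 * a * z t + (x t)\<^sup>2 + (y t)\<^sup>2 + 2 * (z t)\<^sup>2) * \<alpha>4 t)) (at t)"
    and "(y has_real_derivative
            ((a * y t + y t * z t) * (1 + \<alpha>1 t) + y t * (a + z t) * \<alpha>2 t - x t * \<alpha>3 t
             + x t * ((x t)\<^sup>2 + (y t)\<^sup>2) * (4 * a * z t + (x t)\<^sup>2 + (y t)\<^sup>2 + 2 * (z t)\<^sup>2) * \<alpha>4 t)) (at t)"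
    and "(z has_real_derivative
            (- (2 * a * z t + (x t)\<^sup>2 + (y t)\<^sup>2 + (z t)\<^sup>2) * (1 + \<alpha>1 t + \<alpha>2 t))) (at t)"
proof goal_cases
  have circle: "(x t)\<^sup>2 + (y t)\<^sup>2 = a\<^sup>2"
    unfolding x_def y_def by (rule circle_radius_sq)
  have inner: "4 * a * z t + (x t)\<^sup>2 + (y t)\<^sup>2 + 2 * (z t)\<^sup>2 = - a\<^sup>2"
    using circle by (simp add: z_def power2_eq_square)
  {
    case 1
    show ?case
      unfolding inner circle using has_real_derivative_circle(1)[OF \<theta>']
      by (simp add: x_def y_def z_def algebra_simps power2_eq_square power4_eq_xxxx)
  next
    case 2
    show ?case
      unfolding inner circle using has_real_derivative_circle(2)[OF \<theta>']
      by (simp add: x_def y_def z_def algebra_simps power2_eq_square power4_eq_xxxx)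
  next
    case 3
    have "2 * a * z t + (x t)\<^sup>2 + (y t)\<^sup>2 + (z t)\<^sup>2 = 0"
      using circle by (simp add: z_def power2_eq_square)
    then show ?case
      by (simp add: z_def)
  }
qed

theorem proposition2:
  fixes a e \<omega> :: real
    and \<alpha>1 \<alpha>2 \<alpha>3 \<alpha>4 :: "real \<Rightarrow> real"
  assumes \<omega>_pos: "\<omega> > 0"
    and cont1: "continuous_on UNIV \<alpha>1"
    and cont2: "continuous_on UNIV \<alpha>2"
    and cont3: "continuous_on UNIV \<alpha>3"
    and cont4: "continuous_on UNIV \<alpha>4"
  shows
  "((\<forall>t. \<alpha>3 (t + \<omega>) = \<alpha>3 t) \<and> (\<forall>t. \<alpha>3 (- t) = - \<alpha>3 t) \<and> a * (a + e) < 0 \<longrightarrow>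
     (let \<theta> = (\<lambda>t. interval_lebesgue_integral lborel (ereal 0) (ereal t) \<alpha>3);
          x = (\<lambda>t. sqrt (- a * (a + e)) * sin (\<theta> t));
          y = (\<lambda>t. sqrt (- a * (a + e)) * cos (\<theta> t));
          z = (\<lambda>t. - a)
      in (\<forall>t.
            (x has_real_derivative
               ((a * x t + x t * z t) * (1 + \<alpha>1 t) + x t * (a + z t) * \<alpha>2 t + y t * \<alpha>3 t)) (at t)
          \<and> (y has_real_derivative
               ((a * y t + y t * z t) * (1 + \<alpha>1 t) + y t * (a + z t) * \<alpha>2 t - x t * \<alpha>3 t)) (at t)
          \<and> (z has_real_derivative
               ((e * z t - (x t)\<^sup>2 - (y t)\<^sup>2 - (z t)\<^sup>2) * (1 + \<alpha>1 t + \<alpha>2 t))) (at t))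
        \<and> (\<forall>t. x (t + \<omega>) = x t \<and> y (t + \<omega>) = y t \<and> z (t + \<omega>) = z t)))
   \<and>
   ((\<forall>t. \<alpha>3 (t + \<omega>) + a ^ 4 * \<alpha>4 (t + \<omega>) = \<alpha>3 t + a ^ 4 * \<alpha>4 t) \<and>
    (\<forall>t. \<alpha>3 (- t) + a ^ 4 * \<alpha>4 (- t) = - (\<alpha>3 t + a ^ 4 * \<alpha>4 t)) \<longrightarrow>
     (let \<theta> = (\<lambda>t. interval_lebesgue_integral lborel (ereal 0) (ereal t) (\<lambda>s. \<alpha>3 s + a ^ 4 * \<alpha>4 s));
          x = (\<lambda>t. a * sin (\<theta> t));
          y = (\<lambda>t. a * cos (\<theta> t));
          z = (\<lambda>t. - a)
      in (\<forall>t.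
            (x has_real_derivative
               ((a * x t + x t * z t) * (1 + \<alpha>1 t) + x t * (a + z t) * \<alpha>2 t + y t * \<alpha>3 t
                - y t * ((x t)\<^sup>2 + (y t)\<^sup>2) * (4 * a * z t + (x t)\<^sup>2 + (y t)\<^sup>2 + 2 * (z t)\<^sup>2) * \<alpha>4 t)) (at t)
          \<and> (y has_real_derivative
               ((a * y t + y t * z t) * (1 + \<alpha>1 t) + y t * (a + z t) * \<alpha>2 t - x t * \<alpha>3 t
                + x t * ((x t)\<^sup>2 + (y t)\<^sup>2) * (4 * a * z t + (x t)\<^sup>2 + (y t)\<^sup>2 + 2 * (z t)\<^sup>2) * \<alpha>4 t)) (at t)
          \<and> (z has_real_derivative
               (- (2 * a * z t + (x t)\<^sup>2 + (y t)\<^sup>2 + (z t)\<^sup>2) * (1 + \<alpha>1 t + \<alpha>2 t))) (at t))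
        \<and> (\<forall>t. x (t + \<omega>) = x t \<and> y (t + \<omega>) = y t \<and> z (t + \<omega>) = z t)))"
proof -
  define \<theta>\<^sub>1 :: "real \<Rightarrow> real" where "\<theta>\<^sub>1 = (\<lambda>t. LBINT s=(0::real)..t. \<alpha>3 s)"
  define \<theta>\<^sub>2 :: "real \<Rightarrow> real" where "\<theta>\<^sub>2 = (\<lambda>t. LBINT s=(0::real)..t. \<alpha>3 s + a ^ 4 * \<alpha>4 s)"
  have \<theta>\<^sub>1': "\<And>t. (\<theta>\<^sub>1 has_real_derivative \<alpha>3 t) (at t)"
    unfolding \<theta>\<^sub>1_def using cont3 by (rule has_real_derivative_LBINT)
  have \<theta>\<^sub>2': "\<And>t. (\<theta>\<^sub>2 has_real_derivative \<alpha>3 t + a ^ 4 * \<alpha>4 t) (at t)"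
    unfolding \<theta>\<^sub>2_def by (intro has_real_derivative_LBINT continuous_intros cont3 cont4)
  have radius: "(sqrt (- a * (a + e)))\<^sup>2 = - a * (a + e)" if "a * (a + e) < 0"
    using that by simp
  show ?thesis
    unfolding \<theta>\<^sub>1_def[symmetric] \<theta>\<^sub>2_def[symmetric] Let_def
    by (intro conjI impI allI first_system_circular_solution[OF \<theta>\<^sub>1' radius]
        second_system_circular_solution[OF \<theta>\<^sub>2'])
      (simp_all add: periodic_if_derivative_periodic_odd[OF \<theta>\<^sub>1'] periodic_if_derivative_periodic_odd[OF \<theta>\<^sub>2'])
qed

end
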